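(* Let $\mathbb{F}\in\{\mathbb{R},\mathbb{C}\}$, let $A_1,A_2,\ldots$ be a sequence of matrices in $\mathbb{F}^{n\times n}$, and let $\mu$ be a matrix norm on $\mathbb{F}^{n\times n}$. Suppose that $\sum_{i=1}^\infty(\max(\mu(A_i),1)-1)$ converges. Then all general products from $A_1,A_2,\ldots$ are bounded: for every permutation $\sigma$ of the positive integers, every integer $p\ge 0$, and every sequence $(C_{p,r})_{r\ge1}$ of general products as defined below, there is a constant $M$ with $\mu(C_{p,r})\le M$ for all $r\ge 1$.
   Context: A matrix norm is a submultiplicative norm on $\mathbb{F}^{n\times n}$. General products: given a permutation $\sigma$ of the positive integers, set $B_i=A_{\sigma(i)}$; for an integer $p\ge0$ and each $r\ge1$, $C_{p,r}$ is a product of the matrices $B_{p+1},\ldots,B_{p+r}$, each used exactly once, taken in some order (the order may be chosen arbitrarily and independently for each $r$). *)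

theory Defs
  imports "HOL-Analysis.Analysis"
begin

text \<open>Square n x n matrices over a field F are rendered as 'a^'n^'n with 'n a finite
  index type (n = CARD('n)). A matrix norm is a submultiplicative norm on the matrix space.\<close>

definition matrix_norm :: "('a::real_normed_field^'n^'n \<Rightarrow> real) \<Rightarrow> bool" where
  "matrix_norm \<mu> \<longleftrightarrow>
     (\<forall>A. 0 \<le> \<mu> A) \<and>
     (\<forall>A. \<mu> A = 0 \<longleftrightarrow> A = 0) \<and>
     (\<forall>c A. \<mu> (\<chi> i j. c * A $ i $ j) = norm c * \<mu> A) \<and>
     (\<forall>A B. \<mu> (A + B) \<le> \<mu> A + \<mu> B) \<and>
     (\<forall>A B. \<mu> (A ** B) \<le> \<mu> A * \<mu> B)"

definition ordered_prod :: "(nat \<Rightarrow> 'a::semiring_1^'n^'n) \<Rightarrow> nat list \<Rightarrow> 'a^'n^'n" where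
  "ordered_prod B ks = foldr (\<lambda>k M. B k ** M) ks (mat 1)"

definition is_general_product ::
    "(nat \<Rightarrow> 'a::semiring_1^'n^'n) \<Rightarrow> nat \<Rightarrow> nat \<Rightarrow> 'a^'n^'n \<Rightarrow> bool" where
  "is_general_product B p r C \<longleftrightarrow>
     (\<exists>ks. distinct ks \<and> set ks = {p+1..p+r} \<and> C = ordered_prod B ks)"

text \<open>All general products from A 1, A 2, ... are bounded (A 0 is unused; indices start at 1).\<close>
definition general_products_bounded ::
    "('a::semiring_1^'n^'n \<Rightarrow> real) \<Rightarrow> (nat \<Rightarrow> 'a^'n^'n) \<Rightarrow> bool" where
  "general_products_bounded \<mu> A \<longleftrightarrow>
     (\<forall>\<sigma>::nat \<Rightarrow> nat. bij_betw \<sigma> {1..} {1..} \<longrightarrow>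
       (\<forall>(p::nat) (C::nat \<Rightarrow> 'a^'n^'n).
          (\<forall>r\<ge>1. is_general_product (\<lambda>i. A (\<sigma> i)) p r (C r)) \<longrightarrow>
          (\<exists>M. \<forall>r\<ge>1. \<mu> (C r) \<le> M)))"

end

theory Submission
  imports Defs
begin

text \<open>By submultiplicativity, a product of the matrices B k (k in a finite set K), taken in any
  order, has norm at most \<open>\<mu> (mat 1) * (\<Prod>k\<in>K. 1 + x k) \<le> \<mu> (mat 1) * exp (\<Sum>k\<in>K. x k)\<close>
  with \<open>x k = max (\<mu> (B k)) 1 - 1 \<ge> 0\<close>. For a general product the indices \<open>\<sigma> k\<close> of the
  factors are distinct, so the exponent is bounded by the sum of the convergent nonnegative
  series, uniformly in \<open>\<sigma>\<close>, \<open>p\<close>, \<open>r\<close> and the order of the factors.\<close>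

lemma matrix_norm_nonneg: "matrix_norm \<mu> \<Longrightarrow> 0 \<le> \<mu> A"
  by (simp add: matrix_norm_def)

lemma matrix_norm_submult: "matrix_norm \<mu> \<Longrightarrow> \<mu> (A ** B) \<le> \<mu> A * \<mu> B"
  by (simp add: matrix_norm_def)

lemma ordered_prod_Nil: "ordered_prod B [] = mat 1"
  by (simp add: ordered_prod_def)

lemma ordered_prod_Cons: "ordered_prod B (k # ks) = B k ** ordered_prod B ks"
  by (simp add: ordered_prod_def)

lemma matrix_norm_ordered_prod_le:
  fixes \<mu> :: "'a::real_normed_field^'n^'n \<Rightarrow> real"
  assumes "matrix_norm \<mu>"
  shows "\<mu> (ordered_prod B ks) \<le> \<mu> (mat 1) * (\<Prod>k\<leftarrow>ks. max (\<mu> (B k)) 1)"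
proof (induction ks)
  case Nil
  show ?case by (simp add: ordered_prod_Nil)
next
  case (Cons k ks)
  have "\<mu> (ordered_prod B (k # ks)) \<le> \<mu> (B k) * \<mu> (ordered_prod B ks)"
    unfolding ordered_prod_Cons using assms by (rule matrix_norm_submult)
  also have "\<dots> \<le> max (\<mu> (B k)) 1 * (\<mu> (mat 1) * (\<Prod>k\<leftarrow>ks. max (\<mu> (B k)) 1))"
    using Cons.IH assms by (intro mult_mono) (auto simp: matrix_norm_nonneg)
  finally show ?case by (simp add: algebra_simps)
qed

lemma matrix_norm_ordered_prod_le_exp:
  fixes \<mu> :: "'a::real_normed_field^'n^'n \<Rightarrow> real"
  assumes "matrix_norm \<mu>" and "distinct ks"
  shows "\<mu> (ordered_prod B ks) \<le> \<mu> (mat 1) * exp (\<Sum>k\<in>set ks. max (\<mu> (B k)) 1 - 1)"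
proof -
  have "\<mu> (ordered_prod B ks) \<le> \<mu> (mat 1) * (\<Prod>k\<in>set ks. 1 + (max (\<mu> (B k)) 1 - 1))"
    using matrix_norm_ordered_prod_le[OF assms(1)] assms(2)
    by (simp add: prod.distinct_set_conv_list)
  also have "\<dots> \<le> \<mu> (mat 1) * exp (\<Sum>k\<in>set ks. max (\<mu> (B k)) 1 - 1)"
    using assms(1) by (intro mult_left_mono prod_le_exp_sum) (auto simp: matrix_norm_nonneg)
  finally show ?thesis .
qed

lemma sum_inj_le_suminf:
  fixes g :: "nat \<Rightarrow> real"
  assumes "summable g" and "\<And>i. 0 \<le> g i" and "finite I" and "inj_on \<tau> I"
  shows "(\<Sum>k\<in>I. g (\<tau> k)) \<le> suminf g"
proof -
  have "(\<Sum>k\<in>I. g (\<tau> k)) = sum g (\<tau> ` I)"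
    using assms(4) by (simp add: sum.reindex)
  also have "\<dots> \<le> suminf g"
    using assms(1-3) by (intro sum_le_suminf) auto
  finally show ?thesis .
qed

lemma general_products_bounded_if_summable:
  fixes \<mu> :: "'a::real_normed_field^'n^'n \<Rightarrow> real"
  assumes norm: "matrix_norm \<mu>" and summable: "summable (\<lambda>i. max (\<mu> (A (Suc i))) 1 - 1)"
  shows "general_products_bounded \<mu> A"
  unfolding general_products_bounded_def
proof (intro allI impI)
  fix \<sigma> :: "nat \<Rightarrow> nat" and p :: nat and C :: "nat \<Rightarrow> 'a^'n^'n"
  assume \<sigma>: "bij_betw \<sigma> {1..} {1..}"
    and C: "\<forall>r\<ge>1. is_general_product (\<lambda>i. A (\<sigma> i)) p r (C r)"
  define g where "g i = max (\<mu> (A (Suc i))) 1 - 1" for i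
  show "\<exists>M. \<forall>r\<ge>1. \<mu> (C r) \<le> M"
  proof (intro exI allI impI)
    fix r :: nat
    assume "1 \<le> r"
    then obtain ks where ks: "distinct ks" "set ks = {p+1..p+r}"
      and C_r: "C r = ordered_prod (\<lambda>i. A (\<sigma> i)) ks"
      using C unfolding is_general_product_def by blast
    have ks_pos: "set ks \<subseteq> {1..}"
      using ks(2) by auto
    have \<sigma>_pos: "0 < \<sigma> k" if "k \<in> set ks" for k
      using bij_betw_apply[OF \<sigma>] that ks_pos by fastforce
    have \<sigma>_inj: "inj_on \<sigma> (set ks)"
      using bij_betw_imp_inj_on[OF \<sigma>] ks_pos by (rule inj_on_subset)
    have shifted_inj: "inj_on (\<lambda>k. \<sigma> k - 1) (set ks)"
    proof (rule inj_onI)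
      fix k l
      assume k: "k \<in> set ks" and l: "l \<in> set ks" and "\<sigma> k - 1 = \<sigma> l - 1"
      then have "\<sigma> k = \<sigma> l"
        using \<sigma>_pos[OF k] \<sigma>_pos[OF l] by linarith
      then show "k = l"
        using \<sigma>_inj k l by (simp add: inj_on_eq_iff)
    qed
    have "\<mu> (C r) \<le> \<mu> (mat 1) * exp (\<Sum>k\<in>set ks. max (\<mu> (A (\<sigma> k))) 1 - 1)"
      unfolding C_r by (rule matrix_norm_ordered_prod_le_exp[OF norm ks(1)])
    also have "(\<Sum>k\<in>set ks. max (\<mu> (A (\<sigma> k))) 1 - 1) = (\<Sum>k\<in>set ks. g (\<sigma> k - 1))"
      by (intro sum.cong refl) (simp add: g_def \<sigma>_pos)
    also have "\<mu> (mat 1) * exp \<dots> \<le> \<mu> (mat 1) * exp (suminf g)"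
      using summable shifted_inj
      by (intro mult_left_mono exp_mono sum_inj_le_suminf)
        (auto simp: g_def matrix_norm_nonneg[OF norm])
    finally show "\<mu> (C r) \<le> \<mu> (mat 1) * exp (suminf g)" .
  qed
qed

theorem proposition3p1:
  shows "(\<forall>(\<mu>::real^'n^'n \<Rightarrow> real) (A::nat \<Rightarrow> real^'n^'n).
            matrix_norm \<mu> \<longrightarrow> summable (\<lambda>i. max (\<mu> (A (Suc i))) 1 - 1) \<longrightarrow>
            general_products_bounded \<mu> A)
       \<and> (\<forall>(\<mu>::complex^'n^'n \<Rightarrow> real) (A::nat \<Rightarrow> complex^'n^'n).
            matrix_norm \<mu> \<longrightarrow> summable (\<lambda>i. max (\<mu> (A (Suc i))) 1 - 1) \<longrightarrow>
            general_products_bounded \<mu> A)"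
  by (intro conjI allI impI; erule general_products_bounded_if_summable; assumption)

end
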